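(* Let $K$ be a field of characteristic $0$, $\theta=t\frac{d}{dt}$, and let $\mathcal{J}=\theta^5+\sum_{i=0}^4b_i\theta^i\in K(t)[\theta]$ be Calabi-Yau of order $5$. Then there exists a unique Calabi-Yau operator $\mathcal{L}=\theta^4+\sum_{i=0}^3a_i\theta^i\in K(t)[\theta]$ of order $4$ such that $\mathcal{J}$ is the second exterior power of $\mathcal{L}$.
   Context: For monic $\mathcal{L}=\theta^n+\sum_{i<n}a_i\theta^i$: condition (N): $a_i\in K(t)\cap K[[t]]$, $a_i(0)=0$; $\beta$-factor: non-zero solution of $n\,\theta\beta=2a_{n-1}\beta$; formal adjoint $\mathcal{L}^*=(-1)^n\theta^n+\sum_i(-1)^i\theta^ia_i$; self-adjoint: $\mathcal{L}^*=(-1)^n\beta\mathcal{L}\beta^{-1}$; Calabi-Yau: self-adjoint and (N). For order-4 Calabi-Yau $\mathcal{L}$, its second exterior power is the order-5 monic operator $\theta^5+\sum\check a_i\theta^i$ (annihilating $fg'-f'g$ for solutions $f,g$ of $\mathcal{L}$) with, writing $g'=\theta g$: $\check a_4=\tfrac52a_3$, $\check a_3=2a_2+2a_3'+\tfrac74a_3^2$, $\check a_2=-a_1+4a_2'+\tfrac72a_2a_3$, $\check a_1=-4a_0+2a_1'+a_2^2+a_2''+\tfrac32a_1a_3+\tfrac32a_2'a_3+\tfrac14a_2a_3^2$, $\check a_0=-2a_0'+a_1''-2a_0a_3+a_1a_2+\tfrac32a_1'a_3+\tfrac14a_1a_3^2$. *)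

theory Defs
  imports "HOL-Computational_Algebra.Computational_Algebra"
begin

text \<open>Every operator considered
(Calabi-Yau operators satisfy condition (N)) has coefficients in
K(t) \<inter> K[[t]], so coefficients are represented as formal power series,
with the extra requirement that they are rational.  An operator
\<open>\<Sum> c_i \<theta>^i\<close> (coefficients on the left) is represented as the polynomial
\<open>\<Sum> c_i X^i\<close> in \<open>'a fps poly\<close>; composition is the non-commutative product
given by the Leibniz rule.\<close>

definition theta :: "'a::field_char_0 fps \<Rightarrow> 'a fps" where
  "theta f = fps_X * fps_deriv f"

definition opmul :: "'a::field_char_0 fps poly \<Rightarrow> 'a fps poly \<Rightarrow> 'a fps poly" where
  "opmul P Q = (\<Sum>i\<le>degree P. \<Sum>k\<le>i.
      smult (coeff P i * of_nat (i choose k)) (map_poly (theta ^^ k) Q * monom 1 (i - k)))"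

definition monic_op :: "nat \<Rightarrow> 'a::field_char_0 fps poly \<Rightarrow> bool" where
  "monic_op n L \<longleftrightarrow> degree L = n \<and> coeff L n = 1"

definition rational_fps :: "'a::field_char_0 fps \<Rightarrow> bool" where
  "rational_fps a \<longleftrightarrow> (\<exists>p q :: 'a poly. poly q 0 \<noteq> 0 \<and> fps_of_poly q * a = fps_of_poly p)"

definition condN :: "'a::field_char_0 fps poly \<Rightarrow> bool" where
  "condN L \<longleftrightarrow> (\<forall>i<degree L. rational_fps (coeff L i) \<and> fps_nth (coeff L i) 0 = 0)"

definition adjoint :: "'a::field_char_0 fps poly \<Rightarrow> 'a fps poly" where
  "adjoint L = (-1) ^ degree L * monom 1 (degree L)
     + (\<Sum>i<degree L. (-1) ^ i * opmul (monom 1 i) [:coeff L i:])"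

definition beta_factor :: "'a::field_char_0 fps poly \<Rightarrow> 'a fps \<Rightarrow> bool" where
  "beta_factor L \<beta> \<longleftrightarrow> \<beta> \<noteq> 0 \<and>
     of_nat (degree L) * theta \<beta> = 2 * coeff L (degree L - 1) * \<beta>"

definition self_adjoint :: "'a::field_char_0 fps poly \<Rightarrow> bool" where
  "self_adjoint L \<longleftrightarrow> (\<exists>\<beta>. beta_factor L \<beta> \<and>
     adjoint L = (-1) ^ degree L * opmul [:\<beta>:] (opmul L [:inverse \<beta>:]))"

definition calabi_yau :: "nat \<Rightarrow> 'a::field_char_0 fps poly \<Rightarrow> bool" where
  "calabi_yau n L \<longleftrightarrow> monic_op n L \<and> self_adjoint L \<and> condN L"

text \<open>Second exterior power of a monic order-4 operator (explicit formulas).\<close>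
definition ext2 :: "'a::field_char_0 fps poly \<Rightarrow> 'a fps poly" where
  "ext2 L = (let a0 = coeff L 0; a1 = coeff L 1; a2 = coeff L 2; a3 = coeff L 3 in
    [: - 2 * theta a0 + theta (theta a1) - 2 * a0 * a3 + a1 * a2
         + fps_const (3/2) * theta a1 * a3 + fps_const (1/4) * a1 * a3^2,
       - 4 * a0 + 2 * theta a1 + a2^2 + theta (theta a2) + fps_const (3/2) * a1 * a3
         + fps_const (3/2) * theta a2 * a3 + fps_const (1/4) * a2 * a3^2,
       - a1 + 4 * theta a2 + fps_const (7/2) * a2 * a3,
       2 * a2 + 2 * theta a3 + fps_const (7/4) * a3^2,
       fps_const (5/2) * a3,
       1 :])"

end

theory Submission
  imports Defs
begin

text \<open>Write \<open>\<L> = \<theta>\<^sup>4 + 2u\<theta>\<^sup>3 + a\<^sub>2\<theta>\<^sup>2 + a\<^sub>1\<theta> + a\<^sub>0\<close>.  The formulas for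
\<open>\<Lambda>\<^sup>2\<L>\<close> form a triangular system: its coefficients of \<open>\<theta>\<^sup>4, \<theta>\<^sup>3, \<theta>\<^sup>2, \<theta>\<close> determine
\<open>u, a\<^sub>2, a\<^sub>1, a\<^sub>0\<close> in turn, which gives uniqueness and, applied to \<open>\<J>\<close>, a unique candidate
\<open>\<L>\<close> satisfying (N).  Both \<open>\<J>\<close> and \<open>\<L>\<close> have \<beta>-factors solving \<open>\<theta>\<beta> = c\<beta>\<close> with
\<open>\<beta>(0) \<noteq> 0\<close>, so conjugating by \<beta> only replaces \<open>\<theta>\<close> by \<open>\<theta> - c\<close>.  Comparing coefficients,
self-adjointness of \<open>\<J>\<close> yields the single relation that makes \<open>\<L>\<close> self-adjoint, together
with the remaining identity \<open>\<Lambda>\<^sup>2\<L> = \<J>\<close> for the constant coefficient.\<close>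

lemma numeral_mult_cancel_fps:
  fixes a b :: "'a::field_char_0 fps"
  shows "numeral n * a = numeral n * b \<longleftrightarrow> a = b"
  by (simp add: numeral_fps_const)

lemma numeral_mult_fps_const_divide_cancel [simp]:
  fixes x :: "'a::field_char_0 fps"
  shows "numeral n * (fps_const (1 / numeral n) * x) = x"
  by (simp add: numeral_fps_const flip: mult.assoc)

subsection \<open>The derivation \<open>\<theta>\<close>\<close>

lemma theta_add [simp]: "theta (f + g) = theta f + theta g"
  by (simp add: theta_def algebra_simps)

lemma theta_diff [simp]: "theta (f - g) = theta f - theta g"
  by (simp add: theta_def algebra_simps)

lemma theta_minus [simp]: "theta (- f) = - theta f"
  by (simp add: theta_def)

lemma theta_mult [simp]: "theta (f * g) = theta f * g + f * theta g"
  by (simp add: theta_def algebra_simps)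

lemma theta_fps_const [simp]: "theta (fps_const c) = 0"
  by (simp add: theta_def)

lemma theta_0 [simp]: "theta 0 = 0"
  by (simp add: theta_def)

lemma theta_1 [simp]: "theta 1 = 0"
  by (simp add: theta_def)

lemma theta_numeral [simp]: "theta (numeral n) = 0"
  by (simp add: theta_def)

lemma theta_nth_0 [simp]: "theta f $ 0 = 0"
  by (simp add: theta_def)

lemma funpow_theta_0 [simp]: "(theta ^^ k) 0 = 0"
  by (induct k) auto

lemma theta_fps_of_poly: "theta (fps_of_poly p) = fps_of_poly ([:0, 1:] * pderiv p)"
  by (simp only: theta_def fps_of_poly_mult fps_of_poly_fps_X fps_of_poly_pderiv)

subsection \<open>Rational power series\<close>

lemma rational_fps_const [simp]: "rational_fps (fps_const c)"
  unfolding rational_fps_def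
  by (rule exI[of _ "[:c:]"], rule exI[of _ 1]) (simp add: fps_of_poly_const)

lemma rational_fps_numeral [simp]: "rational_fps (numeral n)"
  by (subst numeral_fps_const) (rule rational_fps_const)

lemma rational_fps_add:
  assumes "rational_fps a" "rational_fps b"
  shows "rational_fps (a + b)"
proof -
  obtain p q where q: "poly q 0 \<noteq> 0" and a: "fps_of_poly q * a = fps_of_poly p"
    using assms(1) by (auto simp: rational_fps_def)
  obtain p' q' where q': "poly q' 0 \<noteq> 0" and b: "fps_of_poly q' * b = fps_of_poly p'"
    using assms(2) by (auto simp: rational_fps_def)
  have "fps_of_poly (q * q') * (a + b) = fps_of_poly q' * (fps_of_poly q * a) + fps_of_poly q * (fps_of_poly q' * b)"
    by (simp add: fps_of_poly_mult algebra_simps)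
  also have "\<dots> = fps_of_poly (q' * p + q * p')"
    by (simp add: a b fps_of_poly_mult fps_of_poly_add)
  finally show ?thesis
    unfolding rational_fps_def using q q' by (intro exI[of _ "q' * p + q * p'"] exI[of _ "q * q'"]) simp
qed

lemma rational_fps_mult:
  assumes "rational_fps a" "rational_fps b"
  shows "rational_fps (a * b)"
proof -
  obtain p q where q: "poly q 0 \<noteq> 0" and a: "fps_of_poly q * a = fps_of_poly p"
    using assms(1) by (auto simp: rational_fps_def)
  obtain p' q' where q': "poly q' 0 \<noteq> 0" and b: "fps_of_poly q' * b = fps_of_poly p'"
    using assms(2) by (auto simp: rational_fps_def)
  have "fps_of_poly (q * q') * (a * b) = (fps_of_poly q * a) * (fps_of_poly q' * b)"
    by (simp add: fps_of_poly_mult algebra_simps)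
  also have "\<dots> = fps_of_poly (p * p')"
    by (simp add: a b fps_of_poly_mult)
  finally show ?thesis
    unfolding rational_fps_def using q q' by (intro exI[of _ "p * p'"] exI[of _ "q * q'"]) simp
qed

lemma rational_fps_uminus: "rational_fps a \<Longrightarrow> rational_fps (- a)"
  using rational_fps_mult[OF rational_fps_const[of "-1"]] by (simp flip: fps_const_neg)

lemma rational_fps_diff: "rational_fps a \<Longrightarrow> rational_fps b \<Longrightarrow> rational_fps (a - b)"
  using rational_fps_add[OF _ rational_fps_uminus, of a b] by simp

lemma rational_fps_power: "rational_fps a \<Longrightarrow> rational_fps (a ^ n)"
  by (induct n) (auto intro: rational_fps_mult simp flip: fps_const_1_eq_1)

text \<open>From \<open>q a = p\<close> follows \<open>q\<^sup>2 \<theta>a = q \<theta>p - (\<theta>q) p\<close>.\<close>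

lemma rational_fps_theta:
  assumes "rational_fps a"
  shows "rational_fps (theta a)"
proof -
  obtain p q where q: "poly q 0 \<noteq> 0" and a: "fps_of_poly q * a = fps_of_poly p"
    using assms by (auto simp: rational_fps_def)
  let ?q = "fps_of_poly q" and ?p = "fps_of_poly p"
  have e: "theta ?q * a + ?q * theta a = theta ?p"
    using arg_cong[OF a, of theta] by simp
  have "fps_of_poly (q * q) * theta a = ?q * (?q * theta a)"
    by (simp only: fps_of_poly_mult mult.assoc)
  also have "?q * theta a = theta ?p - theta ?q * a"
    using e by (simp add: eq_diff_eq add.commute)
  also have "?q * (theta ?p - theta ?q * a) = ?q * theta ?p - theta ?q * ?p"
    by (simp only: right_diff_distrib mult.left_commute[of ?q] a)
  also have "\<dots> = fps_of_poly (q * ([:0, 1:] * pderiv p) - ([:0, 1:] * pderiv q) * p)"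
    by (simp add: fps_of_poly_mult fps_of_poly_diff theta_fps_of_poly)
  finally have "fps_of_poly (q * q) * theta a = fps_of_poly (q * ([:0, 1:] * pderiv p) - ([:0, 1:] * pderiv q) * p)" .
  moreover have "poly (q * q) 0 \<noteq> 0" using q by simp
  ultimately show ?thesis
    unfolding rational_fps_def by blast
qed

lemmas rational_fps_intros =
  rational_fps_add rational_fps_mult rational_fps_uminus rational_fps_diff
  rational_fps_power rational_fps_theta rational_fps_const rational_fps_numeral

subsection \<open>Solutions of \<open>\<theta>\<beta> = c\<beta>\<close>\<close>

lemma theta_eq_mult_imp_nth_0_nonzero:
  fixes \<beta> c :: "'a::field_char_0 fps"
  assumes "theta \<beta> = c * \<beta>" "c $ 0 = 0" "\<beta> \<noteq> 0"
  shows "\<beta> $ 0 \<noteq> 0"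
proof
  assume z: "\<beta> $ 0 = 0"
  define m where "m = subdegree \<beta>"
  have nz: "\<beta> $ m \<noteq> 0" using assms(3) m_def by simp
  with z have "m \<noteq> 0" by (cases m) auto
  have "(c * \<beta>) $ m = (\<Sum>i=0..m. c $ i * \<beta> $ (m - i))" by (rule fps_mult_nth)
  also have "\<dots> = 0"
  proof (intro sum.neutral ballI)
    fix i
    show "c $ i * \<beta> $ (m - i) = 0"
      using assms(2) \<open>m \<noteq> 0\<close> nth_less_subdegree_zero[of "m - i" \<beta>]
      by (cases "i = 0") (auto simp: m_def)
  qed
  finally have "theta \<beta> $ m = 0" using assms(1) by simp
  moreover have "theta \<beta> $ m = of_nat m * \<beta> $ m"
    using \<open>m \<noteq> 0\<close> by (cases m) (auto simp: theta_def)
  ultimately show False using nz \<open>m \<noteq> 0\<close> by simp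
qed

lemma theta_eq_mult_solvable:
  fixes c :: "'a::field_char_0 fps"
  assumes "c $ 0 = 0"
  obtains \<beta> where "\<beta> $ 0 \<noteq> 0" "theta \<beta> = c * \<beta>"
proof -
  define g where "g = fps_integral (fps_shift 1 c) 0"
  define \<beta> where "\<beta> = fps_exp 1 oo g"
  have "fps_X * fps_shift 1 c = c"
    using assms by (intro fps_ext) (simp split: nat.split)
  moreover have "fps_deriv \<beta> = \<beta> * fps_shift 1 c"
  proof -
    have "g $ 0 = 0" by (simp add: g_def fps_integral_def)
    then show ?thesis by (simp add: \<beta>_def g_def fps_compose_deriv fps_deriv_fps_integral)
  qed
  ultimately have "theta \<beta> = c * \<beta>"
    unfolding theta_def by (simp add: algebra_simps)
  moreover have "\<beta> $ 0 \<noteq> 0" by (simp add: \<beta>_def)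
  ultimately show ?thesis by (rule that[rotated])
qed

lemma theta_inverse:
  fixes \<beta> :: "'a::field_char_0 fps"
  assumes "\<beta> $ 0 \<noteq> 0" "theta \<beta> = c * \<beta>"
  shows "theta (inverse \<beta>) = - c * inverse \<beta>"
proof -
  have inv: "\<beta> * inverse \<beta> = 1" using assms(1) by (simp add: inverse_mult_eq_1')
  have "theta (\<beta> * inverse \<beta>) = 0" by (simp add: inv)
  then have "\<beta> * (theta (inverse \<beta>) + c * inverse \<beta>) = 0"
    by (simp add: assms(2) algebra_simps)
  moreover have "\<beta> \<noteq> 0" using assms(1) by auto
  ultimately have "theta (inverse \<beta>) + c * inverse \<beta> = 0" by simp
  then show ?thesis by (simp add: eq_neg_iff_add_eq_0)
qed

subsection \<open>Adjoints and conjugation by \<open>\<beta>\<close>\<close>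

lemma coeff_opmul_pCons_0:
  "coeff (opmul P [:c:]) j =
    (\<Sum>i\<le>degree P. if j \<le> i then coeff P i * of_nat (i choose (i - j)) * (theta ^^ (i - j)) c else 0)"
proof -
  have "(\<Sum>k\<le>i. coeff (smult (coeff P i * of_nat (i choose k)) ([:(theta ^^ k) c:] * monom 1 (i - k))) j)
      = (if j \<le> i then coeff P i * of_nat (i choose (i - j)) * (theta ^^ (i - j)) c else 0)" for i
  proof -
    have "(\<Sum>k\<le>i. coeff (smult (coeff P i * of_nat (i choose k)) ([:(theta ^^ k) c:] * monom 1 (i - k))) j)
        = (\<Sum>k\<le>i. if k = i - j \<and> j \<le> i then coeff P i * of_nat (i choose k) * (theta ^^ k) c else 0)"
      by (rule sum.cong) (auto simp: smult_monom)
    then show ?thesis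
      by (cases "j \<le> i") (auto simp: sum.delta)
  qed
  moreover have "map_poly (theta ^^ k) [:c:] = [:(theta ^^ k) c:]" for k
    by (simp add: map_poly_pCons)
  ultimately show ?thesis
    unfolding opmul_def coeff_sum by simp
qed

lemma opmul_pCons_0_left: "opmul [:b:] P = smult b P"
  by (simp add: opmul_def)

lemma coeff_neg_one_power_mult:
  fixes p :: "'b::comm_ring_1 poly"
  shows "coeff ((-1) ^ i * p) j = (-1) ^ i * coeff p j"
proof -
  have "(-1 :: 'b poly) ^ i = [:(-1) ^ i:]" by (induct i) auto
  then show ?thesis by simp
qed

lemma coeff_adjoint:
  fixes L :: "'a::field_char_0 fps poly"
  shows "coeff (adjoint L) j = (-1) ^ degree L * (if j = degree L then 1 else 0)
     + (\<Sum>i<degree L. (-1) ^ i *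
          (if j \<le> i then of_nat (i choose (i - j)) * (theta ^^ (i - j)) (coeff L i) else 0))"
proof -
  have "coeff (opmul (monom 1 i) [:a:]) j =
      (if j \<le> i then of_nat (i choose (i - j)) * (theta ^^ (i - j)) a else 0)" for i and a :: "'a fps"
  proof -
    have "coeff (opmul (monom 1 i) [:a:]) j = (\<Sum>k\<le>i. if k = i then
        (if j \<le> k then of_nat (k choose (k - j)) * (theta ^^ (k - j)) a else 0) else 0)"
      unfolding coeff_opmul_pCons_0 degree_monom_eq[OF one_neq_zero] by (rule sum.cong) auto
    then show ?thesis by (simp only: sum.delta) simp
  qed
  then show ?thesis
    unfolding adjoint_def coeff_add coeff_sum coeff_neg_one_power_mult by simp
qed

text \<open>\<open>theta_minus_pow c k = (\<theta> - c)\<^sup>k 1\<close>\<close>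

fun theta_minus_pow :: "'a::field_char_0 fps \<Rightarrow> nat \<Rightarrow> 'a fps" where
  "theta_minus_pow c 0 = 1"
| "theta_minus_pow c (Suc k) = theta (theta_minus_pow c k) - c * theta_minus_pow c k"

lemma funpow_theta_eq_theta_minus_pow:
  assumes "theta g = - c * g"
  shows "(theta ^^ k) g = theta_minus_pow c k * g"
  by (induct k) (auto simp: assms algebra_simps)

lemma coeff_conjugate:
  fixes \<beta> :: "'a::field_char_0 fps"
  assumes "\<beta> $ 0 \<noteq> 0" "theta \<beta> = c * \<beta>"
  shows "coeff (opmul [:\<beta>:] (opmul L [:inverse \<beta>:])) j =
    (\<Sum>i\<le>degree L. if j \<le> i then coeff L i * of_nat (i choose (i - j)) * theta_minus_pow c (i - j) else 0)"
proof -
  have "\<beta> * inverse \<beta> = 1" using assms(1) by (simp add: inverse_mult_eq_1')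
  then show ?thesis
    unfolding opmul_pCons_0_left coeff_smult coeff_opmul_pCons_0 sum_distrib_left
      funpow_theta_eq_theta_minus_pow[OF theta_inverse[OF assms]]
    by (intro sum.cong) (auto simp: algebra_simps)
qed

lemma adjoint_eq_conjugate_iff:
  fixes L :: "'a::field_char_0 fps poly"
  assumes "\<beta> $ 0 \<noteq> 0" "theta \<beta> = c * \<beta>"
  shows "adjoint L = (-1) ^ degree L * opmul [:\<beta>:] (opmul L [:inverse \<beta>:]) \<longleftrightarrow>
    (\<forall>j\<le>degree L. (-1) ^ degree L * (if j = degree L then 1 else 0)
       + (\<Sum>i<degree L. (-1) ^ i * (if j \<le> i then of_nat (i choose (i - j)) * (theta ^^ (i - j)) (coeff L i) else 0))
     = (-1) ^ degree L * (\<Sum>i\<le>degree L. if j \<le> i then coeff L i * of_nat (i choose (i - j)) * theta_minus_pow c (i - j) else 0))"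
proof -
  let ?C = "(-1) ^ degree L * opmul [:\<beta>:] (opmul L [:inverse \<beta>:])"
  have "coeff (adjoint L) j = coeff ?C j" if "degree L < j" for j
    using that unfolding coeff_adjoint coeff_neg_one_power_mult coeff_conjugate[OF assms]
    by (auto intro!: sum.neutral)
  then have "adjoint L = ?C \<longleftrightarrow> (\<forall>j\<le>degree L. coeff (adjoint L) j = coeff ?C j)"
    unfolding poly_eq_iff using not_le by blast
  then show ?thesis
    by (simp only: coeff_adjoint coeff_neg_one_power_mult coeff_conjugate[OF assms])
qed

lemma self_adjoint_order4I:
  fixes u a0 a1 a2 \<beta> :: "'a::field_char_0 fps"
  assumes \<beta>: "\<beta> $ 0 \<noteq> 0" "theta \<beta> = u * \<beta>"
    and a1: "a1 = a2 * u + theta a2 - 3 * u * theta u - u ^ 3 - theta (theta u)"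
  shows "self_adjoint [:a0, a1, a2, 2 * u, 1:]"
proof -
  let ?L = "[:a0, a1, a2, 2 * u, 1:]"
  have deg: "degree ?L = 4" by (simp add: eval_nat_numeral)
  have "\<beta> \<noteq> 0" using \<beta>(1) by auto
  then have "beta_factor ?L \<beta>"
    unfolding beta_factor_def deg by (simp add: \<beta>(2) eval_nat_numeral algebra_simps)
  moreover have "adjoint ?L = (-1) ^ degree ?L * opmul [:\<beta>:] (opmul ?L [:inverse \<beta>:])"
    unfolding adjoint_eq_conjugate_iff[OF \<beta>] unfolding deg
    by (simp add: eval_nat_numeral le_Suc_eq all_conj_distrib a1) (intro conjI; algebra)
  ultimately show ?thesis
    unfolding self_adjoint_def by blast
qed

subsection \<open>The second exterior power\<close>

lemma ext2_normalized:
  fixes a0 a1 a2 u :: "'a::field_char_0 fps"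
  shows "ext2 [:a0, a1, a2, 2 * u, 1:] =
    [:- 2 * theta a0 + theta (theta a1) - 4 * a0 * u + a1 * a2 + 3 * theta a1 * u + a1 * u ^ 2,
      - 4 * a0 + 2 * theta a1 + a2 * a2 + theta (theta a2) + 3 * a1 * u + 3 * theta a2 * u + a2 * u * u,
      - a1 + 4 * theta a2 + 7 * a2 * u,
      2 * a2 + 4 * theta u + 7 * u ^ 2,
      5 * u,
      1:]"
  by (simp add: ext2_def Let_def eval_nat_numeral numeral_fps_const algebra_simps)

lemma ext2_eq_of_self_adjoint_top_coeffs:
  fixes J :: "'a::field_char_0 fps poly" and a0 a1 a2 u :: "'a fps"
  assumes sa: "self_adjoint J" and u0: "u $ 0 = 0"
    and top: "\<forall>k>0. coeff J k = coeff (ext2 [:a0, a1, a2, 2 * u, 1:]) k"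
  shows "a1 = a2 * u + theta a2 - 3 * u * theta u - u ^ 3 - theta (theta u)"
    and "J = ext2 [:a0, a1, a2, 2 * u, 1:]"
proof -
  define b0 where "b0 = coeff J 0"
  have J: "J = [:b0, - 4 * a0 + 2 * theta a1 + a2 * a2 + theta (theta a2) + 3 * a1 * u + 3 * theta a2 * u + a2 * u * u,
      - a1 + 4 * theta a2 + 7 * a2 * u, 2 * a2 + 4 * theta u + 7 * u ^ 2, 5 * u, 1:]" (is "J = ?N")
  proof (rule poly_eqI)
    fix k
    show "coeff J k = coeff ?N k"
      using top ext2_normalized[of a0 a1 a2 u] by (cases k) (auto simp: b0_def)
  qed
  have deg: "degree J = 5" by (simp add: J eval_nat_numeral)
  obtain \<beta> where bf: "beta_factor J \<beta>"
    and eq: "adjoint J = (-1) ^ degree J * opmul [:\<beta>:] (opmul J [:inverse \<beta>:])"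
    using sa unfolding self_adjoint_def by blast
  have "\<beta> \<noteq> 0" and "5 * theta \<beta> = 5 * (2 * u * \<beta>)"
    using bf unfolding beta_factor_def deg by (simp_all add: J eval_nat_numeral algebra_simps)
  then have "theta \<beta> = 2 * u * \<beta>" by (simp only: numeral_mult_cancel_fps)
  with \<open>\<beta> \<noteq> 0\<close> have \<beta>: "\<beta> $ 0 \<noteq> 0" "theta \<beta> = 2 * u * \<beta>"
    using theta_eq_mult_imp_nth_0_nonzero[of \<beta> "2 * u"] u0 by auto
  note eqs = eq[unfolded adjoint_eq_conjugate_iff[OF \<beta>], unfolded deg, rule_format]
  have "2 * a1 = 2 * (a2 * u + theta a2 - 3 * u * theta u - u ^ 3 - theta (theta u))"
    using eqs[of 2] by (simp add: J eval_nat_numeral; algebra)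
  then show a1: "a1 = a2 * u + theta a2 - 3 * u * theta u - u ^ 3 - theta (theta u)"
    by (simp only: numeral_mult_cancel_fps)
  have "2 * b0 = 2 * (- 2 * theta a0 + theta (theta a1) - 4 * a0 * u + a1 * a2 + 3 * theta a1 * u + a1 * u ^ 2)"
    using eqs[of 0] by (simp add: J eval_nat_numeral a1; algebra)
  then have "b0 = - 2 * theta a0 + theta (theta a1) - 4 * a0 * u + a1 * a2 + 3 * theta a1 * u + a1 * u ^ 2"
    by (simp only: numeral_mult_cancel_fps)
  then show "J = ext2 [:a0, a1, a2, 2 * u, 1:]"
    unfolding ext2_normalized J by simp
qed

lemma ext2_top_coeffs_solvable:
  fixes J :: "'a::field_char_0 fps poly"
  assumes "monic_op 5 J" "condN J"
  obtains u a2 a1 a0 where "condN [:a0, a1, a2, 2 * u, 1:]" "u $ 0 = 0"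
    "\<forall>k>0. coeff J k = coeff (ext2 [:a0, a1, a2, 2 * u, 1:]) k"
proof -
  have deg: "degree J = 5" and lead: "coeff J 5 = 1"
    using assms(1) by (auto simp: monic_op_def)
  have rat: "rational_fps (coeff J i)" and nth0: "coeff J i $ 0 = 0" if "i < 5" for i
    using assms(2) that deg by (auto simp: condN_def)
  define u where "u = fps_const (1/5) * coeff J 4"
  define a2 where "a2 = fps_const (1/2) * (coeff J 3 - 4 * theta u - 7 * u ^ 2)"
  define a1 where "a1 = 4 * theta a2 + 7 * a2 * u - coeff J 2"
  define a0 where "a0 = fps_const (1/4) * (2 * theta a1 + a2 * a2 + theta (theta a2)
    + 3 * a1 * u + 3 * theta a2 * u + a2 * u * u - coeff J 1)"
  have ru: "rational_fps u" unfolding u_def by (intro rational_fps_intros rat) simp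
  then have ra2: "rational_fps a2" unfolding a2_def by (intro rational_fps_intros rat) simp_all
  then have ra1: "rational_fps a1" unfolding a1_def using ru by (intro rational_fps_intros rat) simp_all
  then have ra0: "rational_fps a0" unfolding a0_def using ru ra2 by (intro rational_fps_intros rat) simp_all
  have u0: "u $ 0 = 0" using nth0[of 4] by (simp add: u_def)
  then have z2: "a2 $ 0 = 0" using nth0[of 3] by (simp add: a2_def)
  then have z1: "a1 $ 0 = 0" using nth0[of 2] u0 by (simp add: a1_def)
  then have z0: "a0 $ 0 = 0" using nth0[of 1] u0 z2 by (simp add: a0_def)
  have "condN [:a0, a1, a2, 2 * u, 1:]"
    using ru ra2 ra1 ra0 u0 z2 z1 z0
    unfolding condN_def by (auto simp: less_Suc_eq numeral_eq_Suc intro: rational_fps_intros)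
  moreover have "coeff J k = coeff (ext2 [:a0, a1, a2, 2 * u, 1:]) k" if "k > 0" for k
  proof -
    have "5 * u = coeff J 4" "2 * a2 = coeff J 3 - 4 * theta u - 7 * u ^ 2"
      "4 * a0 = 2 * theta a1 + a2 * a2 + theta (theta a2)
        + 3 * a1 * u + 3 * theta a2 * u + a2 * u * u - coeff J 1"
      by (simp_all add: u_def a2_def a0_def)
    then have coeffs: "coeff J 4 = 5 * u" "coeff J 3 = 2 * a2 + 4 * theta u + 7 * u ^ 2"
      "coeff J 2 = - a1 + 4 * theta a2 + 7 * a2 * u"
      "coeff J 1 = - 4 * a0 + 2 * theta a1 + a2 * a2 + theta (theta a2)
        + 3 * a1 * u + 3 * theta a2 * u + a2 * u * u"
      by (simp_all add: a1_def algebra_simps)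
    consider "k = 1" | "k = 2" | "k = 3" | "k = 4" | "k = 5" | "k > 5"
      using \<open>k > 0\<close> by linarith
    then show ?thesis
      by cases (simp_all only: coeffs lead, simp_all add: ext2_normalized coeff_eq_0 deg eval_nat_numeral)
  qed
  ultimately show ?thesis
    using that u0 by blast
qed

lemma ext2_inj_monic4:
  fixes L1 L2 :: "'a::field_char_0 fps poly"
  assumes "monic_op 4 L1" "monic_op 4 L2" "ext2 L1 = ext2 L2"
  shows "L1 = L2"
proof (rule poly_eqI)
  fix n :: nat
  have ext2: "coeff (ext2 L1) k = coeff (ext2 L2) k" for k
    using assms(3) by simp
  have c3: "coeff L1 3 = coeff L2 3"
    using ext2[of 4] by (simp add: ext2_def Let_def eval_nat_numeral)
  have c2: "coeff L1 2 = coeff L2 2"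
    using ext2[of 3] c3 by (simp add: ext2_def Let_def eval_nat_numeral)
  have c1: "coeff L1 1 = coeff L2 1"
    using ext2[of 2] c3 c2 by (simp add: ext2_def Let_def eval_nat_numeral)
  have c0: "coeff L1 0 = coeff L2 0"
    using ext2[of 1] c3 c2 c1 by (simp add: ext2_def Let_def eval_nat_numeral)
  consider "n < 4" | "n = 4" | "n > 4" by linarith
  then show "coeff L1 n = coeff L2 n"
  proof cases
    case 1
    then show ?thesis using c0 c1 c2 c3 by (auto simp: less_Suc_eq numeral_eq_Suc)
  qed (use assms(1,2) in \<open>auto simp: monic_op_def coeff_eq_0\<close>)
qed

theorem proposition1p9:
  fixes J :: "'a::field_char_0 fps poly"
  assumes "calabi_yau 5 J"
  shows "\<exists>!L :: 'a fps poly. calabi_yau 4 L \<and> ext2 L = J"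
proof -
  have J: "monic_op 5 J" "self_adjoint J" "condN J"
    using assms by (auto simp: calabi_yau_def)
  obtain u a2 a1 a0 where N: "condN [:a0, a1, a2, 2 * u, 1:]" and u0: "u $ 0 = 0"
    and top: "\<forall>k>0. coeff J k = coeff (ext2 [:a0, a1, a2, 2 * u, 1:]) k"
    by (rule ext2_top_coeffs_solvable[OF J(1,3)])
  define L where "L = [:a0, a1, a2, 2 * u, 1:]"
  note SA = ext2_eq_of_self_adjoint_top_coeffs[OF J(2) u0 top]
  obtain \<beta> where "\<beta> $ 0 \<noteq> 0" "theta \<beta> = u * \<beta>"
    by (rule theta_eq_mult_solvable[OF u0])
  then have "self_adjoint L"
    unfolding L_def using SA(1) by (rule self_adjoint_order4I)
  moreover have "monic_op 4 L"
    by (simp add: L_def monic_op_def eval_nat_numeral)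
  ultimately have CY: "calabi_yau 4 L"
    using N unfolding calabi_yau_def L_def by blast
  moreover have ext2_L: "ext2 L = J"
    unfolding L_def by (rule SA(2)[symmetric])
  moreover have "L' = L" if "calabi_yau 4 L'" "ext2 L' = J" for L'
    using that CY ext2_L ext2_inj_monic4[of L' L] by (simp add: calabi_yau_def)
  ultimately show ?thesis
    by blast
qed

end
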